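(* Let $(X_n,\eta_n)$ be a time-homogeneous Markov chain on a locally finite set $\Sigma\subseteq\mathbb{R}_+\times S$ ($S$ finite), and suppose that for some $p>0$ there is $C_p<\infty$ with $\mathbb{E}_{x,i}[|X_{n+1}-X_n|^p]\le C_p$ for all $(x,i)\in\Sigma$. Let $r\in\mathbb{R}$, $\zeta\in(0,1)$, $E_n=\{|X_{n+1}-X_n|\le X_n^\zeta\}$, and let $g:S\to\mathbb{R}$. Then, as $x\to\infty$, \[\mathbb{E}_{x,i}[(g(\eta_{n+1})X_{n+1}^r-g(\eta_n)X_n^r)\mathbf 1(E_n)]=x^r\sum_{j\in S}(g(j)-g(i))q_{ij}(x)+o(x^r).\]
   Context: $\mathbb{E}_{x,i}[\cdot]=\mathbb{E}[\cdot\mid X_n=x,\eta_n=i]$ and $q_{ij}(x)=\Pr[\eta_{n+1}=j\mid X_n=x,\eta_n=i]$. *)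

theory Defs
  imports "HOL-Probability.Probability" "HOL-Library.Landau_Symbols"
begin

text \<open>A time-homogeneous Markov chain (X_n, eta_n) on Sigma is described by its
  one-step transition kernel K : state \<Rightarrow> distribution of the next state.
  E_{x,i}[F(X_n,eta_n,X_{n+1},eta_{n+1})] = integral of F((x,i), .) w.r.t. K (x,i).\<close>

definition cond_exp :: "(real \<times> 's \<Rightarrow> (real \<times> 's) pmf) \<Rightarrow> real \<times> 's \<Rightarrow> (real \<times> 's \<Rightarrow> real) \<Rightarrow> real" where
  "cond_exp K s F = measure_pmf.expectation (K s) F"

definition q :: "(real \<times> 's \<Rightarrow> (real \<times> 's) pmf) \<Rightarrow> 's \<Rightarrow> 's \<Rightarrow> real \<Rightarrow> real" where
  "q K i j x = measure_pmf.prob (K (x, i)) {s. snd s = j}"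

definition locally_finite_state_space :: "(real \<times> 's) set \<Rightarrow> bool" where
  "locally_finite_state_space \<Sigma> \<longleftrightarrow> \<Sigma> \<subseteq> {s. 0 \<le> fst s} \<and> (\<forall>b. finite {s\<in>\<Sigma>. fst s \<le> b})"

end

theory Submission
  imports Defs
begin

text \<open>Split the expectation according to the event \<open>E\<close> that the jump \<open>\<bar>X' - x\<bar>\<close> is at most
  \<open>x\<^sup>\<zeta>\<close>. On \<open>E\<close> we have \<open>X' = x (1 + O(x\<^sup>\<zeta>\<^sup>-\<^sup>1))\<close>, so \<open>X'\<^sup>r = x\<^sup>r (1 + o(1))\<close> uniformly, and replacing
  \<open>g(\<eta>') X'\<^sup>r\<close> by \<open>g(\<eta>') x\<^sup>r\<close> costs \<open>o(x\<^sup>r)\<close>. The complement of \<open>E\<close> has probability \<open>O(x\<^sup>-\<^sup>\<zeta>\<^sup>p)\<close> by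
  Markov's inequality applied to the \<open>p\<close>-th moment of the jump, so adding it back in the term
  \<open>x\<^sup>r (g(\<eta>') - g(i))\<close> also costs \<open>o(x\<^sup>r)\<close>. What remains is
  \<open>x\<^sup>r \<bbbE>[g(\<eta>') - g(i)] = x\<^sup>r \<Sum>\<^sub>j (g j - g i) q\<^sub>i\<^sub>j(x)\<close>.\<close>

definition powr_distortion :: "real \<Rightarrow> real \<Rightarrow> real" where
  "powr_distortion r e = \<bar>(1 + e) powr r - 1\<bar> + \<bar>(1 - e) powr r - 1\<bar>"

lemma powr_distortion_nonneg: "0 \<le> powr_distortion r e"
  by (simp add: powr_distortion_def)

lemma powr_near_one:
  fixes t e r :: real
  assumes "\<bar>t - 1\<bar> \<le> e" "e < 1"
  shows "\<bar>t powr r - 1\<bar> \<le> powr_distortion r e"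
proof (cases "r \<ge> 0")
  case True
  have "(1 - e) powr r \<le> t powr r" "t powr r \<le> (1 + e) powr r"
    using assms True by (auto intro!: powr_mono2)
  then show ?thesis unfolding powr_distortion_def by linarith
next
  case False
  have "t powr r \<le> (1 - e) powr r" "(1 + e) powr r \<le> t powr r"
    using assms False by (auto intro!: powr_mono2')
  then show ?thesis unfolding powr_distortion_def by linarith
qed

lemma powr_relative_perturbation:
  fixes x y e r :: real
  assumes "0 < x" "\<bar>y - x\<bar> \<le> x * e" "e < 1"
  shows "\<bar>y powr r - x powr r\<bar> \<le> x powr r * powr_distortion r e"
proof -
  define t where "t = y / x"
  have y: "y = x * t" using assms(1) by (simp add: t_def)
  have "y - x = x * (t - 1)" by (simp add: y algebra_simps)
  then have "x * \<bar>t - 1\<bar> = \<bar>y - x\<bar>"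
    using assms(1) by (simp add: abs_mult)
  then have t: "\<bar>t - 1\<bar> \<le> e"
    using assms(1,2) by (metis mult_le_cancel_left_pos)
  then have "0 \<le> t" using assms(3) by linarith
  then have "y powr r - x powr r = x powr r * (t powr r - 1)"
    using assms(1) by (simp add: y powr_mult right_diff_distrib)
  then have "\<bar>y powr r - x powr r\<bar> = x powr r * \<bar>t powr r - 1\<bar>"
    by (simp add: abs_mult)
  also have "\<dots> \<le> x powr r * powr_distortion r e"
    using powr_near_one[OF t assms(3)] by (simp add: mult_left_mono)
  finally show ?thesis .
qed

lemma powr_distortion_tendsto_zero:
  assumes "((\<lambda>x. e x) \<longlongrightarrow> 0) F"
  shows "((\<lambda>x. powr_distortion r (e x)) \<longlongrightarrow> 0) F"
proof -
  have "((\<lambda>x. powr_distortion r (e x)) \<longlongrightarrow> \<bar>(1 + 0) powr r - 1\<bar> + \<bar>(1 - 0) powr r - 1\<bar>) F"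
    unfolding powr_distortion_def by (intro tendsto_intros assms) simp_all
  then show ?thesis by simp
qed

lemma markov_inequality_powr_pmf:
  fixes M :: "'a pmf" and f :: "'a \<Rightarrow> real"
  assumes moment: "(\<integral>\<^sup>+ s. ennreal (\<bar>f s\<bar> powr p) \<partial>measure_pmf M) \<le> ennreal C"
    and "0 < a" "0 < p"
  shows "a powr p * measure_pmf.prob M {s. a < \<bar>f s\<bar>} \<le> max C 0"
proof -
  define S where "S = {s. a < \<bar>f s\<bar>}"
  have "ennreal (a powr p) * indicator S s \<le> ennreal (\<bar>f s\<bar> powr p)" for s
    using assms(2,3) by (auto simp: S_def indicator_def intro!: ennreal_leI powr_mono2)
  then have "ennreal (a powr p) * emeasure (measure_pmf M) S \<le> (\<integral>\<^sup>+ s. ennreal (\<bar>f s\<bar> powr p) \<partial>measure_pmf M)"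
    by (subst nn_integral_cmult_indicator[symmetric]) (auto intro!: nn_integral_mono)
  also have "\<dots> \<le> ennreal (max C 0)"
    using moment by (metis ennreal_max_0 max.commute)
  finally have "ennreal (a powr p * measure_pmf.prob M S) \<le> ennreal (max C 0)"
    by (simp add: measure_pmf.emeasure_eq_measure ennreal_mult)
  then show ?thesis unfolding S_def by (subst (asm) ennreal_le_iff) auto
qed

lemma integrable_measure_pmf_bounded:
  fixes f :: "'a \<Rightarrow> real"
  assumes "\<And>s. \<bar>f s\<bar> \<le> B"
  shows "integrable (measure_pmf M) f"
  by (rule measure_pmf.integrable_const_bound[where B=B]) (auto simp: assms)

lemma expectation_fun_snd:
  fixes M :: "('a \<times> 's::finite) pmf" and f :: "'s \<Rightarrow> real"
  shows "measure_pmf.expectation M (\<lambda>s. f (snd s)) = (\<Sum>j\<in>UNIV. f j * measure_pmf.prob M {s. snd s = j})"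
proof -
  have "measure_pmf.expectation M (\<lambda>s. f (snd s)) = measure_pmf.expectation (map_pmf snd M) f"
    by simp
  also have "\<dots> = (\<Sum>j\<in>UNIV. f j * pmf (map_pmf snd M) j)"
    by (rule integral_measure_pmf_real) auto
  also have "\<dots> = (\<Sum>j\<in>UNIV. f j * measure_pmf.prob M {s. snd s = j})"
    by (simp add: pmf_map vimage_def)
  finally show ?thesis .
qed

lemma abs_expectation_diff_le_pmf:
  fixes f h b :: "'a \<Rightarrow> real"
  assumes close: "\<And>s. \<bar>f s - h s\<bar> \<le> b s"
    and h_bounded: "\<And>s. \<bar>h s\<bar> \<le> B\<^sub>h" and b_bounded: "\<And>s. b s \<le> B\<^sub>b"
  shows "\<bar>measure_pmf.expectation M f - measure_pmf.expectation M h\<bar> \<le> measure_pmf.expectation M b"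
proof -
  have b_nonneg: "0 \<le> b s" for s
    using close[of s] by linarith
  have int_b: "integrable M b"
    by (rule integrable_measure_pmf_bounded[where B = B\<^sub>b]) (use b_nonneg b_bounded in simp)
  have int_h: "integrable M h"
    by (rule integrable_measure_pmf_bounded[OF h_bounded])
  have int_diff: "integrable M (\<lambda>s. f s - h s)"
    by (rule integrable_measure_pmf_bounded[where B = B\<^sub>b]) (use close b_bounded in \<open>blast intro: order_trans\<close>)
  have "integrable M f"
    using Bochner_Integration.integrable_add[OF int_diff int_h] by simp
  then have "\<bar>measure_pmf.expectation M f - measure_pmf.expectation M h\<bar>
      = \<bar>measure_pmf.expectation M (\<lambda>s. f s - h s)\<bar>"
    by (simp add: Bochner_Integration.integral_diff[OF _ int_h])
  also have "\<dots> \<le> measure_pmf.expectation M b"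
    using integral_norm_bound[of M "\<lambda>s. f s - h s", unfolded real_norm_def]
      integral_mono[OF integrable_abs[OF int_diff] int_b close]
    by (rule order_trans)
  finally show ?thesis .
qed

lemma truncated_increment_approx:
  fixes g :: "'s \<Rightarrow> real" and i j :: 's and x y e r G :: real
  assumes "0 < x" "e < 1" and G: "\<And>j. \<bar>g j\<bar> \<le> G"
  shows "\<bar>(g j * y powr r - g i * x powr r) * indicator {y. \<bar>y - x\<bar> \<le> x * e} y - x powr r * (g j - g i)\<bar>
         \<le> G * x powr r * powr_distortion r e + 2 * G * x powr r * indicator {y. x * e < \<bar>y - x\<bar>} y"
proof (cases "\<bar>y - x\<bar> \<le> x * e")
  case True
  have "\<bar>g j * (y powr r - x powr r)\<bar> \<le> G * (x powr r * powr_distortion r e)"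
    unfolding abs_mult using True assms powr_relative_perturbation[of x y e r] order_trans[OF abs_ge_zero G]
    by (intro mult_mono) auto
  then show ?thesis using True by (simp add: algebra_simps)
next
  case False
  then have "\<bar>(g j * y powr r - g i * x powr r) * indicator {y. \<bar>y - x\<bar> \<le> x * e} y - x powr r * (g j - g i)\<bar>
      = x powr r * \<bar>g j - g i\<bar>"
    by (simp add: abs_mult)
  also have "\<dots> \<le> x powr r * (2 * G)"
    using G[of i] G[of j] by (intro mult_left_mono) auto
  moreover have "0 \<le> G * x powr r * powr_distortion r e"
    using order_trans[OF abs_ge_zero G] powr_distortion_nonneg[of r e] by simp
  ultimately show ?thesis
    using False by (simp add: algebra_simps)
qed

lemma truncated_drift_error_bound:
  fixes M :: "(real \<times> 's::finite) pmf" and g :: "'s \<Rightarrow> real"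
  assumes x: "1 < x" and zeta: "\<zeta> < 1" and p: "0 < p"
    and moment: "(\<integral>\<^sup>+ s. ennreal (\<bar>fst s - x\<bar> powr p) \<partial>measure_pmf M) \<le> ennreal C"
    and G: "\<And>j. \<bar>g j\<bar> \<le> G"
  shows "\<bar>measure_pmf.expectation M
            (\<lambda>s. (g (snd s) * fst s powr r - g i * x powr r) * indicator {s. \<bar>fst s - x\<bar> \<le> x powr \<zeta>} s)
          - x powr r * (\<Sum>j\<in>UNIV. (g j - g i) * measure_pmf.prob M {s. snd s = j})\<bar>
         \<le> x powr r * (G * powr_distortion r (x powr (\<zeta> - 1)) + 2 * G * max C 0 * x powr (- (\<zeta> * p)))"
proof -
  define e where "e = x powr (\<zeta> - 1)"
  define far where "far = {s :: real \<times> 's. x powr \<zeta> < \<bar>fst s - x\<bar>}"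
  have G0: "0 \<le> G" using G[of i] by linarith
  have e1: "e < 1" using x zeta by (simp add: e_def powr_less_one)
  have xe: "x powr \<zeta> = x * e" using x by (simp add: e_def powr_diff)
  have far_prob: "measure_pmf.prob M far \<le> max C 0 * x powr (- (\<zeta> * p))"
  proof -
    have "(x powr \<zeta>) powr p * measure_pmf.prob M far \<le> max C 0"
      unfolding far_def using x p by (intro markov_inequality_powr_pmf[OF moment]) auto
    then show ?thesis
      using x by (simp add: powr_powr powr_minus_divide field_simps)
  qed
  define bound where
    "bound s = G * x powr r * powr_distortion r e + 2 * G * x powr r * indicator far s" for s
  have approx: "\<bar>(g (snd s) * fst s powr r - g i * x powr r) * indicator {s. \<bar>fst s - x\<bar> \<le> x powr \<zeta>} s
      - x powr r * (g (snd s) - g i)\<bar> \<le> bound s" for s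
    using truncated_increment_approx[where g = g and i = i and j = "snd s" and x = x and y = "fst s"
        and e = e and r = r and G = G, OF _ e1 G] x
    by (simp add: bound_def xe far_def indicator_def)
  have "\<bar>x powr r * (g j - g i)\<bar> \<le> x powr r * (2 * G)" for j
    using G[of i] G[of j] by (simp add: abs_mult mult_left_mono)
  moreover have "bound s \<le> G * x powr r * powr_distortion r e + 2 * G * x powr r" for s
    using G0 by (simp add: bound_def indicator_def)
  ultimately have "\<bar>measure_pmf.expectation M
            (\<lambda>s. (g (snd s) * fst s powr r - g i * x powr r) * indicator {s. \<bar>fst s - x\<bar> \<le> x powr \<zeta>} s)
          - measure_pmf.expectation M (\<lambda>s. x powr r * (g (snd s) - g i))\<bar> \<le> measure_pmf.expectation M bound"
    by (intro abs_expectation_diff_le_pmf[OF approx]) auto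
  also have "\<dots> = G * x powr r * powr_distortion r e + 2 * G * x powr r * measure_pmf.prob M far"
  proof -
    have "integrable M (indicator far :: _ \<Rightarrow> real)"
      by (rule integrable_measure_pmf_bounded[where B = 1]) (simp add: indicator_def)
    then show ?thesis
      by (simp add: bound_def[abs_def] measure_pmf.emeasure_eq_measure)
  qed
  also have "\<dots> \<le> G * x powr r * powr_distortion r e + 2 * G * x powr r * (max C 0 * x powr (- (\<zeta> * p)))"
    using far_prob G0 x by (intro add_left_mono mult_left_mono) auto
  finally show ?thesis
    using expectation_fun_snd[of M "\<lambda>j. x powr r * (g j - g i)"]
    by (simp add: e_def sum_distrib_left algebra_simps)
qed

theorem lemma3p5:
  fixes K :: "real \<times> 's::finite \<Rightarrow> (real \<times> 's) pmf"
    and \<Sigma> :: "(real \<times> 's) set"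
    and p Cp r \<zeta> :: real
    and g :: "'s \<Rightarrow> real"
    and i :: 's
  assumes lf: "locally_finite_state_space \<Sigma>"
    and closed: "\<And>s. s \<in> \<Sigma> \<Longrightarrow> set_pmf (K s) \<subseteq> \<Sigma>"
    and p_pos: "p > 0"
    and moment: "\<And>x j. (x, j) \<in> \<Sigma> \<Longrightarrow>
        (\<integral>\<^sup>+ s. ennreal (\<bar>fst s - x\<bar> powr p) \<partial>measure_pmf (K (x, j))) \<le> ennreal Cp"
    and zeta: "0 < \<zeta>" "\<zeta> < 1"
  shows "(\<lambda>x. cond_exp K (x, i)
              (\<lambda>s. (g (snd s) * fst s powr r - g i * x powr r)
                   * indicator {s. \<bar>fst s - x\<bar> \<le> x powr \<zeta>} s)
           - x powr r * (\<Sum>j\<in>UNIV. (g j - g i) * q K i j x))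
         \<in> o[at_top \<sqinter> principal {x. (x, i) \<in> \<Sigma>}](\<lambda>x. x powr r)"
  (is "?D \<in> o[?F](\<lambda>x. x powr r)")
proof (rule smalloI_tendsto)
  define G where "G = (\<Sum>j\<in>UNIV. \<bar>g j\<bar>)"
  have G: "\<bar>g j\<bar> \<le> G" for j
    unfolding G_def by (rule member_le_sum) auto
  define B where "B x = G * powr_distortion r (x powr (\<zeta> - 1)) + 2 * G * max Cp 0 * x powr (- (\<zeta> * p))" for x
  have "(B \<longlongrightarrow> G * 0 + 2 * G * max Cp 0 * 0) at_top"
    unfolding B_def using zeta p_pos
    by (intro tendsto_intros powr_distortion_tendsto_zero tendsto_neg_powr filterlim_ident) auto
  then have "(B \<longlongrightarrow> 0) ?F" by (simp add: tendsto_mono[OF inf_le1])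
  moreover have "\<forall>\<^sub>F x in ?F. norm (?D x / x powr r) \<le> B x"
    unfolding eventually_inf_principal
  proof (intro eventually_mono[OF eventually_gt_at_top[of 1]] impI)
    fix x :: real assume "1 < x" and "x \<in> {x. (x, i) \<in> \<Sigma>}"
    then have "\<bar>?D x\<bar> \<le> x powr r * B x"
      using truncated_drift_error_bound[OF _ zeta(2) p_pos moment[of x i], where i = i and g = g and G = G and r = r]
      by (simp add: B_def cond_exp_def q_def G)
    then show "norm (?D x / x powr r) \<le> B x"
      using \<open>1 < x\<close> by (simp add: abs_div divide_le_eq mult.commute)
  qed
  ultimately show "((\<lambda>x. ?D x / x powr r) \<longlongrightarrow> 0) ?F"
    by (rule Lim_null_comparison[rotated])
  show "\<forall>\<^sub>F x in ?F. x powr r \<noteq> 0"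
    unfolding eventually_inf_principal by (rule eventually_mono[OF eventually_gt_at_top[of 1]]) simp
qed

end
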